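(* Let $F$ be the fractal percolation in $[0,1]^2$ with parameters $M\in\mathbb{N}_{\geq2}$ and $p>1/M^2$, $p\leq 1$, $D=\log(M^2p)/\log M$, $r=1/M$. Let $x$ be a point which is a common corner of four level-1 squares $J_1,J_2,J_3,J_4$ (so $x$ lies in the interior of $[0,1]^2$), numbered so that $J_1$ and $J_2$ intersect only in $x$. Define $$E_2:=2(M-1)^2\sum_{n=1}^\infty r^{nD}\mathbb{E}V_0(C_n^1\cap C_n^2),\quad E_3:=4(M-1)^2\sum_{n=1}^\infty r^{nD}\mathbb{E}V_0(C_n^1\cap C_n^2\cap C_n^3),$$ $$E_4:=(M-1)^2\sum_{n=1}^\infty r^{nD}\mathbb{E}V_0\Big(\bigcap_{j=1}^4C_n^j\Big).$$ Then $$E_2=2(M-1)^2\left(\frac{1}{M^2p-1}-\frac{2}{M^2-1}+\frac{p}{M^2-p}\right),$$ $$E_3=4(M-1)^2\left(\frac{1}{M^2p-1}-\frac{3}{M^2-1}+\frac{3p}{M^2-p}-\frac{p^2}{M^2-p^2}\right),$$ $$E_4=(M-1)^2\left(\frac{1}{M^2p-1}-\frac{4}{M^2-1}+\frac{6p}{M^2-p}-\frac{4p^2}{M^2-p^2}+\frac{p^3}{M^2-p^3}\right).$$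
   Context: Fractal percolation in $[0,1]^2$: $F_0=[0,1]^2$; given $F_{n-1}$, a union of closed grid squares of side $M^{-(n-1)}$, each is divided into $M^2$ closed subsquares of side $M^{-n}$, each kept independently (of everything else) with probability $p$; $F_n$ is the union of kept subsquares. The level-1 squares are the $M^2$ closed subsquares of $[0,1]^2$ of side $1/M$. For a level-1 square $J_j$, $C_n^j$ is the union of those level-$n$ grid squares (side $M^{-n}$) contained in $J_j$ that do not belong to $F_n$. $V_0$ is the Euler characteristic. *)

theory Defs
  imports "HOL-Probability.Probability"
begin

definition grid_sq :: "nat \<Rightarrow> nat \<Rightarrow> nat \<times> nat \<Rightarrow> (real \<times> real) set" where
  "grid_sq M n q =
     {real (fst q) / real M ^ n .. (real (fst q) + 1) / real M ^ n} \<times>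
     {real (snd q) / real M ^ n .. (real (snd q) + 1) / real M ^ n}"

text \<open>Coins: X k q is the independent Bernoulli(p) decision for the level-k square q (k >= 1).
  A level-n square is kept (belongs to F_n) iff the coins of it and all of its ancestors
  at levels 1..n are True.  For n = 0 the unit square is always kept (F_0 = [0,1]^2).\<close>
definition kept :: "nat \<Rightarrow> (nat \<Rightarrow> nat \<times> nat \<Rightarrow> 'a \<Rightarrow> bool) \<Rightarrow> nat \<Rightarrow> nat \<times> nat \<Rightarrow> 'a \<Rightarrow> bool" where
  "kept M X n q \<omega> = (\<forall>k\<in>{1..n}. X k (fst q div M ^ (n - k), snd q div M ^ (n - k)) \<omega>)"

definition perc_F :: "nat \<Rightarrow> (nat \<Rightarrow> nat \<times> nat \<Rightarrow> 'a \<Rightarrow> bool) \<Rightarrow> nat \<Rightarrow> 'a \<Rightarrow> (real \<times> real) set" where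
  "perc_F M X n \<omega> = \<Union> {grid_sq M n q | q. fst q < M ^ n \<and> snd q < M ^ n \<and> kept M X n q \<omega>}"

definition Cset :: "nat \<Rightarrow> (nat \<Rightarrow> nat \<times> nat \<Rightarrow> 'a \<Rightarrow> bool) \<Rightarrow> nat \<Rightarrow> (real \<times> real) set \<Rightarrow> 'a \<Rightarrow> (real \<times> real) set" where
  "Cset M X n J \<omega> = \<Union> {grid_sq M n q | q. fst q < M ^ n \<and> snd q < M ^ n \<and>
       grid_sq M n q \<subseteq> J \<and> \<not> kept M X n q \<omega>}"

text \<open>Euler characteristic of a polyconvex set (finite union of compact convex sets),
  via the inclusion-exclusion formula, with chi(K) = 1 for nonempty compact convex K.\<close>
definition euler_char :: "('b::euclidean_space) set \<Rightarrow> int" where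
  "euler_char A = (THE e. \<forall>(K::nat \<Rightarrow> 'b set) m.
      (\<forall>i<m. compact (K i) \<and> convex (K i)) \<and> A = (\<Union>i<m. K i) \<longrightarrow>
      e = (\<Sum>I\<in>Pow {..<m} - {{}}. (-1) ^ (card I + 1) * (if (\<Inter>i\<in>I. K i) \<noteq> {} then 1 else 0)))"

end

(*
  Since J_1 and J_2 meet only in the corner x, for every T with {1,2} <= T <= {1..4} the set
  \<Inter>_{j \<in> T} C_n^j is either {x} or empty, so its Euler characteristic is the indicator of
  the event that, for each j in T, the level-n square of J_j at the corner x has been removed.
  The survival of that square is decided by the coins along its lineage (its ancestors at levels
  1..n); lineages with different level-1 ancestors are disjoint, so these events are independent,
  each of probability 1 - p^n, and E V_0 = (1 - p^n)^|T|.  Finally r^(nD) = (M^2 p)^(-n), so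
  expanding (1 - p^n)^|T| binomially turns each series into a finite combination of geometric
  series, which sum to the stated closed forms.
*)
theory Submission
  imports Defs
begin

definition nerve_euler_char :: "(nat \<Rightarrow> 'b set) \<Rightarrow> nat \<Rightarrow> int" where
  "nerve_euler_char K m =
     (\<Sum>I\<in>Pow {..<m} - {{}}. (-1) ^ (card I + 1) * (if (\<Inter>i\<in>I. K i) \<noteq> {} then 1 else 0))"

lemma euler_char_eqI:
  fixes K :: "nat \<Rightarrow> 'b::euclidean_space set"
  assumes "\<forall>i<m. compact (K i) \<and> convex (K i)" and "A = (\<Union>i<m. K i)"
    and "\<And>L n. \<forall>i<n. compact (L i) \<and> convex (L i) \<Longrightarrow> A = (\<Union>i<n. L i) \<Longrightarrow>
           nerve_euler_char L n = e"
  shows "euler_char A = e"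
  unfolding euler_char_def nerve_euler_char_def[symmetric]
  by (rule the_equality) (use assms in blast)+

lemma euler_char_empty: "euler_char ({} :: 'b::euclidean_space set) = 0"
proof (rule euler_char_eqI[of 0 "\<lambda>_. {}"])
  fix L :: "nat \<Rightarrow> 'b set" and n
  assume "{} = (\<Union>i<n. L i)"
  then have "(\<Inter>i\<in>I. L i) = {}" if "I \<in> Pow {..<n} - {{}}" for I
    using that by auto
  then show "nerve_euler_char L n = 0"
    unfolding nerve_euler_char_def by (intro sum.neutral) auto
qed auto

lemma nerve_euler_char_singleton:
  assumes "{a} = (\<Union>i<m. K i)"
  shows "nerve_euler_char K m = 1"
proof -
  define S where "S = {i. i < m \<and> K i \<noteq> {}}"
  have "finite S" unfolding S_def by auto
  have "a \<in> (\<Union>i<m. K i)" using assms by blast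
  then have "S \<noteq> {}" unfolding S_def by auto
  have K_eq: "K i = {a}" if "i \<in> S" for i
  proof -
    have "K i \<subseteq> {a}" using that assms unfolding S_def by auto
    then show ?thesis using that subset_singletonD unfolding S_def by auto
  qed
  have nonempty_iff: "(\<Inter>i\<in>I. K i) \<noteq> {} \<longleftrightarrow> I \<subseteq> S" if "I \<in> Pow {..<m} - {{}}" for I
  proof
    show "I \<subseteq> S" if "(\<Inter>i\<in>I. K i) \<noteq> {}"
      using that \<open>I \<in> Pow {..<m} - {{}}\<close> unfolding S_def by auto
    show "(\<Inter>i\<in>I. K i) \<noteq> {}" if "I \<subseteq> S"
      using that K_eq by blast
  qed
  have "nerve_euler_char K m = (\<Sum>I\<in>Pow {..<m} - {{}}. if I \<subseteq> S then (-1) ^ (card I + 1) else 0)"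
    unfolding nerve_euler_char_def by (rule sum.cong) (auto simp: nonempty_iff)
  also have "\<dots> = (\<Sum>I\<in>Pow S - {{}}. (-1) ^ (card I + 1))"
    by (subst sum.inter_filter[symmetric]) (auto intro: sum.cong simp: S_def)
  also have "\<dots> = 1 - (\<Sum>I\<in>Pow S. (-1) ^ card I)"
    using \<open>finite S\<close> by (simp add: sum_diff1 sum_negf)
  also have "(\<Sum>I\<in>Pow S. (-1::int) ^ card I) = (\<Prod>i\<in>S. 1 - 1)"
    using prod_diff_conv_sum[OF \<open>finite S\<close>, of "\<lambda>_. 1::int" "\<lambda>_. 1"] by simp
  also have "\<dots> = 0"
    using \<open>finite S\<close> \<open>S \<noteq> {}\<close> by (simp add: card_gt_0_iff)
  finally show ?thesis by simp
qed

lemma euler_char_singleton: "euler_char {a :: 'b::euclidean_space} = 1"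
  by (rule euler_char_eqI[of 1 "\<lambda>_. {a}"]) (auto intro: nerve_euler_char_singleton)

definition grid_ivl :: "real \<Rightarrow> nat \<Rightarrow> real set" where
  "grid_ivl s a = {real a / s .. (real a + 1) / s}"

lemma grid_sq_eq_Times: "grid_sq M n q = grid_ivl (real M ^ n) (fst q) \<times> grid_ivl (real M ^ n) (snd q)"
  unfolding grid_sq_def grid_ivl_def ..

lemma grid_ivl_Int_eq_singletonD:
  assumes "s > 0" and "grid_ivl s a \<inter> grid_ivl s b = {t}"
  shows "t = real (max a b) / s"
proof -
  have "{max (real a / s) (real b / s) .. min ((real a + 1) / s) ((real b + 1) / s)} = {t}"
    using assms(2) unfolding grid_ivl_def by (simp add: Int_atLeastAtMost)
  then have "t = max (real a / s) (real b / s)"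
    by (metis atLeastAtMost_singleton_iff)
  then show ?thesis
    using assms(1) by (simp add: max_divide_distrib_right of_nat_max)
qed

lemma grid_ivl_corner:
  assumes "s > 0" and "real u / s \<in> grid_ivl s a"
  shows "u = a \<or> u = a + 1"
proof -
  have "real a \<le> real u" "real u \<le> real a + 1"
    using assms unfolding grid_ivl_def by (simp_all add: divide_le_cancel)
  then show ?thesis by linarith
qed

(* Among the N equal parts of grid interval a, the one having the endpoint u of a as an endpoint:
   the first one for u = a, the last one for u = a + 1. *)
definition corner_index :: "nat \<Rightarrow> nat \<Rightarrow> nat \<Rightarrow> nat" where
  "corner_index N a u = (if u = a then a * N else u * N - 1)"

lemma grid_ivl_refine_corner_iff:
  assumes "s > 0" and "N > 0" and "u = a \<or> u = a + 1"
  shows "grid_ivl (s * real N) q \<subseteq> grid_ivl s a \<and> real u / s \<in> grid_ivl (s * real N) q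
    \<longleftrightarrow> q = corner_index N a u"
proof -
  have "grid_ivl (s * real N) q \<subseteq> grid_ivl s a \<and> real u / s \<in> grid_ivl (s * real N) q
    \<longleftrightarrow> real a * N \<le> real q \<and> real q + 1 \<le> real a * N + N \<and>
        real q \<le> real u * N \<and> real u * N \<le> real q + 1"
  proof -
    have "x / (s * N) \<le> y / s \<longleftrightarrow> x \<le> y * N" "y / s \<le> x / (s * N) \<longleftrightarrow> y * N \<le> x"
      "x / (s * N) \<le> y / (s * N) \<longleftrightarrow> x \<le> y" for x y
      using assms(1,2) by (simp_all add: field_simps)
    then show ?thesis
      unfolding grid_ivl_def by (auto simp: atLeastatMost_subset_iff algebra_simps)
  qed
  also have "\<dots> \<longleftrightarrow> a * N \<le> q \<and> q + 1 \<le> a * N + N \<and> q \<le> u * N \<and> u * N \<le> q + 1"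
    unfolding of_nat_le_iff[where 'a=real, symmetric] by (simp add: add.commute)
  also have "\<dots> \<longleftrightarrow> q = corner_index N a u"
    using assms(2,3) unfolding corner_index_def by (cases "u = a") (auto simp: algebra_simps)
  finally show ?thesis .
qed

lemma corner_index_less:
  assumes "N > 0" and "a < M" and "u = a \<or> u = a + 1"
  shows "corner_index N a u < M * N"
proof -
  have "(a + 1) * N \<le> M * N" using assms(2) by (intro mult_le_mono1) simp
  then show ?thesis
    using assms unfolding corner_index_def by (cases "u = a") (auto simp: algebra_simps)
qed

lemma corner_index_div:
  assumes "N > 0" and "u = a \<or> u = a + 1"
  shows "corner_index N a u div N = a"
  by (rule div_nat_eqI) (use assms in \<open>auto simp: corner_index_def algebra_simps\<close>)

lemma grid_sq_refine_corner_iff: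
  assumes "M > 0" and "u = a \<or> u = a + 1" and "v = b \<or> v = b + 1"
  shows "grid_sq M (Suc n) q \<subseteq> grid_sq M 1 (a, b) \<and> (real u / M, real v / M) \<in> grid_sq M (Suc n) q
    \<longleftrightarrow> q = (corner_index (M ^ n) a u, corner_index (M ^ n) b v)"
proof -
  have scale: "real M ^ Suc n = real M * real (M ^ n)" by simp
  have "grid_ivl (real M * real (M ^ n)) i \<noteq> {}" for i
    using assms(1) unfolding grid_ivl_def by (simp add: divide_right_mono)
  then have "grid_sq M (Suc n) q \<subseteq> grid_sq M 1 (a, b) \<and> (real u / M, real v / M) \<in> grid_sq M (Suc n) q
    \<longleftrightarrow> (grid_ivl (real M * real (M ^ n)) (fst q) \<subseteq> grid_ivl (real M) a \<and>
         real u / M \<in> grid_ivl (real M * real (M ^ n)) (fst q)) \<and>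
        (grid_ivl (real M * real (M ^ n)) (snd q) \<subseteq> grid_ivl (real M) b \<and>
         real v / M \<in> grid_ivl (real M * real (M ^ n)) (snd q))"
    unfolding grid_sq_eq_Times scale power_one_right by (auto simp: times_subset_iff)
  also have "\<dots> \<longleftrightarrow> q = (corner_index (M ^ n) a u, corner_index (M ^ n) b v)"
    using grid_ivl_refine_corner_iff[of "real M" "M ^ n" u a "fst q"]
      grid_ivl_refine_corner_iff[of "real M" "M ^ n" v b "snd q"] assms
    by (simp only: of_nat_0_less_iff zero_less_power prod_eq_iff fst_conv snd_conv)
  finally show ?thesis .
qed

definition lineage :: "nat \<Rightarrow> nat \<Rightarrow> nat \<times> nat \<Rightarrow> (nat \<times> nat \<times> nat) set" where
  "lineage M n q = (\<lambda>k. (k, fst q div M ^ (n - k), snd q div M ^ (n - k))) ` {1..n}"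

lemma kept_iff_lineage: "kept M X n q \<omega> \<longleftrightarrow> (\<forall>(k, q')\<in>lineage M n q. X k q' \<omega>)"
  unfolding kept_def lineage_def by auto

lemma finite_lineage: "finite (lineage M n q)"
  unfolding lineage_def by simp

lemma card_lineage: "card (lineage M n q) = n"
  unfolding lineage_def by (subst card_image) (auto simp: inj_on_def)

lemma lineage_subset_coins:
  assumes "fst q < M ^ n" and "snd q < M ^ n"
  shows "lineage M n q \<subseteq> {(k, q). 1 \<le> k \<and> fst q < M ^ k \<and> snd q < M ^ k}"
proof
  fix i assume "i \<in> lineage M n q"
  then obtain k where k: "k \<in> {1..n}" and i: "i = (k, fst q div M ^ (n - k), snd q div M ^ (n - k))"
    unfolding lineage_def by blast
  have "M ^ n = M ^ k * M ^ (n - k)"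
    using k by (simp flip: power_add)
  then have "fst q div M ^ (n - k) < M ^ k" "snd q div M ^ (n - k) < M ^ k"
    using assms by (auto intro!: less_mult_imp_div_less)
  then show "i \<in> {(k, q). 1 \<le> k \<and> fst q < M ^ k \<and> snd q < M ^ k}"
    using k i by simp
qed

lemma lineage_disjointI:
  assumes "(fst q div M ^ (n - 1), snd q div M ^ (n - 1)) \<noteq> (fst q' div M ^ (n - 1), snd q' div M ^ (n - 1))"
  shows "lineage M n q \<inter> lineage M n q' = {}"
proof (rule ccontr)
  assume "lineage M n q \<inter> lineage M n q' \<noteq> {}"
  then obtain k where k: "k \<in> {1..n}"
    and eq: "fst q div M ^ (n - k) = fst q' div M ^ (n - k)" "snd q div M ^ (n - k) = snd q' div M ^ (n - k)"
    unfolding lineage_def by fastforce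
  have "a div M ^ (n - k) div M ^ (k - 1) = a div M ^ (n - 1)" for a
    using k by (simp add: div_mult2_eq[symmetric] flip: power_add)
  then show False
    using assms eq by metis
qed

lemma (in prob_space) prob_indep_events_all:
  assumes "indep_events A I" and "finite S" and "S \<subseteq> I"
  shows "prob {\<omega> \<in> space M. \<forall>i\<in>S. \<omega> \<in> A i} = (\<Prod>i\<in>S. prob (A i))"
proof (cases "S = {}")
  case False
  have "A i \<subseteq> space M" if "i \<in> S" for i
  proof -
    have "A i \<in> events" using assms that by (auto simp: indep_events_def)
    then show ?thesis by (rule sets.sets_into_space)
  qed
  then have "{\<omega> \<in> space M. \<forall>i\<in>S. \<omega> \<in> A i} = (\<Inter>i\<in>S. A i)"
    using False by blast
  then show ?thesis
    using assms False by (simp add: indep_events_def)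
qed (simp add: prob_space)

lemma (in prob_space) events_all_and_blocks_fail:
  assumes "\<And>i. i \<in> I \<Longrightarrow> A i \<in> events" and "finite T"
    and "\<And>j. j \<in> T \<Longrightarrow> finite (B j) \<and> B j \<subseteq> I" and "finite S" and "S \<subseteq> I"
  shows "{\<omega> \<in> space M. (\<forall>i\<in>S. \<omega> \<in> A i) \<and> (\<forall>j\<in>T. \<exists>i\<in>B j. \<omega> \<notin> A i)} \<in> events"
proof (rule sets.sets_Collect_conj)
  have "{\<omega> \<in> space M. \<omega> \<in> A i} = A i" "{\<omega> \<in> space M. \<omega> \<notin> A i} = space M - A i" if "i \<in> I" for i
    using sets.sets_into_space[OF assms(1)[OF that]] by auto
  then have leaf_events: "{\<omega> \<in> space M. \<omega> \<in> A i} \<in> events" "{\<omega> \<in> space M. \<omega> \<notin> A i} \<in> events"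
    if "i \<in> I" for i
    using assms(1)[OF that] that by auto
  show "{\<omega> \<in> space M. \<forall>i\<in>S. \<omega> \<in> A i} \<in> events"
    using assms(4,5) leaf_events(1) by (intro sets.sets_Collect_finite_All) auto
  have "{\<omega> \<in> space M. \<exists>i\<in>B j. \<omega> \<notin> A i} \<in> events" if "j \<in> T" for j
    using assms(3)[OF that] leaf_events(2) by (intro sets.sets_Collect_finite_Ex) auto
  then show "{\<omega> \<in> space M. \<forall>j\<in>T. \<exists>i\<in>B j. \<omega> \<notin> A i} \<in> events"
    using assms(2) by (intro sets.sets_Collect_finite_All)
qed

lemma (in prob_space) prob_indep_events_all_and_blocks_fail:
  assumes indep: "indep_events A I" and "finite T" and "disjoint_family_on B T"
    and "\<And>j. j \<in> T \<Longrightarrow> finite (B j) \<and> B j \<subseteq> I"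
    and "finite S" and "S \<subseteq> I" and "\<And>j. j \<in> T \<Longrightarrow> S \<inter> B j = {}"
  shows "prob {\<omega> \<in> space M. (\<forall>i\<in>S. \<omega> \<in> A i) \<and> (\<forall>j\<in>T. \<exists>i\<in>B j. \<omega> \<notin> A i)}
    = (\<Prod>i\<in>S. prob (A i)) * (\<Prod>j\<in>T. 1 - (\<Prod>i\<in>B j. prob (A i)))"
  using \<open>finite T\<close> assms(3-)
  \<comment> \<open>Adding a block j turns the event for S into the one for S minus the one for S \<union> B j;
    this is why the statement carries the coins S that are required to be true.\<close>
proof (induction T arbitrary: S rule: finite_induct)
  case empty
  then show ?case using prob_indep_events_all[OF indep] by simp
next
  case (insert j T)
  let ?E = "\<lambda>S. {\<omega> \<in> space M. (\<forall>i\<in>S. \<omega> \<in> A i) \<and> (\<forall>j\<in>T. \<exists>i\<in>B j. \<omega> \<notin> A i)}"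
  have A_events: "A i \<in> events" if "i \<in> I" for i
    using indep that unfolding indep_events_def by blast
  have B_T: "finite (B j') \<and> B j' \<subseteq> I" if "j' \<in> T" for j'
    using insert.prems(2) that by blast
  have "disjoint_family_on B T"
    using insert.prems(1) by (rule disjoint_family_on_mono[rotated]) auto
  have disj: "B j \<inter> B j' = {}" if "j' \<in> T" for j'
    using insert.prems(1) insert.hyps(2) that unfolding disjoint_family_on_def by auto
  have Bj: "finite (B j)" "B j \<subseteq> I" "S \<inter> B j = {}"
    using insert.prems(2,5) by auto
  have IH_S: "prob (?E S) = (\<Prod>i\<in>S. prob (A i)) * (\<Prod>j\<in>T. 1 - (\<Prod>i\<in>B j. prob (A i)))"
    by (rule insert.IH) (use \<open>disjoint_family_on B T\<close> B_T insert.prems(3-5) in auto)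
  have IH_SB: "prob (?E (S \<union> B j))
      = (\<Prod>i\<in>S \<union> B j. prob (A i)) * (\<Prod>j\<in>T. 1 - (\<Prod>i\<in>B j. prob (A i)))"
  proof (rule insert.IH)
    show "(S \<union> B j) \<inter> B j' = {}" if "j' \<in> T" for j'
      using insert.prems(5) disj that by blast
  qed (use \<open>disjoint_family_on B T\<close> B_T Bj insert.prems(3,4) in auto)
  have "prob {\<omega> \<in> space M. (\<forall>i\<in>S. \<omega> \<in> A i) \<and> (\<forall>j\<in>insert j T. \<exists>i\<in>B j. \<omega> \<notin> A i)}
      = prob (?E S - ?E (S \<union> B j))"
    by (rule arg_cong[where f = prob]) blast
  also have "\<dots> = prob (?E S) - prob (?E (S \<union> B j))"
  proof (rule finite_measure_Diff)
    show "?E S \<in> events"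
      using A_events insert.hyps(1) B_T insert.prems(3,4) by (rule events_all_and_blocks_fail)
    show "?E (S \<union> B j) \<in> events"
      using A_events insert.hyps(1) B_T by (rule events_all_and_blocks_fail) (use Bj insert.prems(3,4) in auto)
  qed auto
  also have "\<dots> = (\<Prod>i\<in>S. prob (A i)) * (1 - (\<Prod>i\<in>B j. prob (A i)))
      * (\<Prod>j\<in>T. 1 - (\<Prod>i\<in>B j. prob (A i)))"
    unfolding IH_S IH_SB prod.union_disjoint[OF insert.prems(3) Bj(1,3)] by (simp add: algebra_simps)
  also have "\<dots> = (\<Prod>i\<in>S. prob (A i)) * (\<Prod>j\<in>insert j T. 1 - (\<Prod>i\<in>B j. prob (A i)))"
    using insert.hyps by simp
  finally show ?case .
qed

lemma sums_power_Suc: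
  fixes x :: "'a::real_normed_field"
  assumes "norm x < 1"
  shows "(\<lambda>n. x ^ Suc n) sums (x / (1 - x))"
  using sums_mult[OF geometric_sums[of x], of x] assms by simp

lemma sums_power_Suc_times_one_minus_power_Suc:
  fixes c q :: real
  assumes "0 \<le> c" "c < 1" "0 \<le> q" "q \<le> 1"
  shows "(\<lambda>n. c ^ Suc n * (1 - q ^ Suc n) ^ k)
    sums (\<Sum>i\<le>k. (-1) ^ i * real (k choose i) * (c * q ^ i / (1 - c * q ^ i)))"
proof -
  have binomial_term: "c ^ Suc n * (real (k choose i) * (- (q ^ Suc n)) ^ i * 1 ^ (k - i))
      = (-1) ^ i * real (k choose i) * (c * q ^ i) ^ Suc n" for n i
  proof -
    have "(- (q ^ Suc n)) ^ i = (-1) ^ i * (q ^ Suc n) ^ i"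
      by (rule power_minus)
    also have "(q ^ Suc n) ^ i = (q ^ i) ^ Suc n"
      by (simp only: power_mult[symmetric] mult.commute)
    finally show ?thesis
      by (simp only: power_one mult_1_right power_mult_distrib mult_ac)
  qed
  have expand: "c ^ Suc n * (1 - q ^ Suc n) ^ k = (\<Sum>i\<le>k. (-1) ^ i * real (k choose i) * (c * q ^ i) ^ Suc n)"
    for n
    using binomial_ring[of "- (q ^ Suc n)" 1 k] by (simp only: binomial_term sum_distrib_left diff_conv_add_uminus add.commute)
  have "c * q ^ i < 1" for i
    using assms mult_left_le[of "q ^ i" c] power_le_one[of q i] by linarith
  then have geometric: "(\<lambda>n. (c * q ^ i) ^ Suc n) sums (c * q ^ i / (1 - c * q ^ i))" for i
    using assms by (intro sums_power_Suc) simp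
  show ?thesis
    unfolding expand by (rule sums_sum) (rule sums_mult[OF geometric])
qed

lemma inverse_powr_log_quotient:
  fixes b y :: real
  assumes "1 < b" and "0 < y"
  shows "(1 / b) powr (real m * (ln y / ln b)) = (1 / y) ^ m"
proof -
  have "(1 / b) powr (real m * (ln y / ln b)) = exp (real m * (ln y / ln b) * ln (1 / b))"
    using assms(1) by (simp add: powr_def)
  also have "\<dots> = exp (real m * - ln y)"
    using assms(1) by (simp add: ln_div)
  also have "\<dots> = exp (- ln y) ^ m"
    by (rule exp_of_nat_mult)
  also have "exp (- ln y) = 1 / y"
    using assms(2) by (simp add: exp_minus inverse_eq_divide)
  finally show ?thesis .
qed

locale corner_percolation = prob_space P
  for P :: "'a measure" +
  fixes M :: nat and p :: real
    and X :: "nat \<Rightarrow> nat \<times> nat \<Rightarrow> 'a \<Rightarrow> bool"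
    and x :: "real \<times> real" and J :: "nat \<Rightarrow> nat \<times> nat"
  assumes M_pos: "0 < M"
    and indep: "indep_vars (\<lambda>_. count_space UNIV) (\<lambda>(k, q). X k q)
                  {(k, q). 1 \<le> k \<and> fst q < M ^ k \<and> snd q < M ^ k}"
    and bern: "\<And>k q. 1 \<le> k \<Longrightarrow> fst q < M ^ k \<Longrightarrow> snd q < M ^ k \<Longrightarrow>
                  prob {\<omega> \<in> space P. X k q \<omega>} = p"
    and J_valid: "\<And>j. j \<in> {1..4} \<Longrightarrow> fst (J j) < M \<and> snd (J j) < M"
    and J_inj: "inj_on J {1..4}"
    and x_corner: "\<And>j. j \<in> {1..4} \<Longrightarrow> x \<in> grid_sq M 1 (J j)"
    and J12: "grid_sq M 1 (J 1) \<inter> grid_sq M 1 (J 2) = {x}"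
begin

lemma corner_coordinates:
  obtains u v where "x = (real u / M, real v / M)"
    and "\<And>j. j \<in> {1..4} \<Longrightarrow>
           (u = fst (J j) \<or> u = fst (J j) + 1) \<and> (v = snd (J j) \<or> v = snd (J j) + 1)"
proof -
  have M: "real M > 0" using M_pos by simp
  let ?I = "grid_ivl (real M)"
  have prod: "(?I (fst (J 1)) \<inter> ?I (fst (J 2))) \<times> (?I (snd (J 1)) \<inter> ?I (snd (J 2))) = {x}"
    using J12 by (simp add: grid_sq_eq_Times Times_Int_Times)
  then have "?I (fst (J 1)) \<inter> ?I (fst (J 2)) \<noteq> {}" "?I (snd (J 1)) \<inter> ?I (snd (J 2)) \<noteq> {}"
    by auto
  then have "?I (fst (J 1)) \<inter> ?I (fst (J 2)) = {fst x}" "?I (snd (J 1)) \<inter> ?I (snd (J 2)) = {snd x}"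
    using arg_cong[OF prod, of "image fst"] arg_cong[OF prod, of "image snd"] by simp_all
  then have "x = (real (max (fst (J 1)) (fst (J 2))) / M, real (max (snd (J 1)) (snd (J 2))) / M)"
    using grid_ivl_Int_eq_singletonD[OF M] by (metis prod.collapse)
  moreover have "(u = fst (J j) \<or> u = fst (J j) + 1) \<and> (v = snd (J j) \<or> v = snd (J j) + 1)"
    if "x = (real u / M, real v / M)" "j \<in> {1..4}" for u v j
    using x_corner[OF that(2)] that(1) grid_ivl_corner[OF M]
    by (simp add: grid_sq_eq_Times mem_Times_iff)
  ultimately show ?thesis using that by blast
qed

(* corner_sq n j lives at level n + 1, matching the summation index Suc n of the theorem. *)
definition corner_sq :: "nat \<Rightarrow> nat \<Rightarrow> nat \<times> nat" where
  "corner_sq n j = (THE q. grid_sq M (Suc n) q \<subseteq> grid_sq M 1 (J j) \<and> x \<in> grid_sq M (Suc n) q)"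

lemma corner_sq:
  assumes "j \<in> {1..4}"
  shows corner_sq_iff:
      "grid_sq M (Suc n) q \<subseteq> grid_sq M 1 (J j) \<and> x \<in> grid_sq M (Suc n) q \<longleftrightarrow> q = corner_sq n j"
    and corner_sq_less: "fst (corner_sq n j) < M ^ Suc n \<and> snd (corner_sq n j) < M ^ Suc n"
    and corner_sq_div: "(fst (corner_sq n j) div M ^ n, snd (corner_sq n j) div M ^ n) = J j"
proof -
  obtain u v where x: "x = (real u / M, real v / M)"
    and uv_all: "\<And>j. j \<in> {1..4} \<Longrightarrow>
                  (u = fst (J j) \<or> u = fst (J j) + 1) \<and> (v = snd (J j) \<or> v = snd (J j) + 1)"
    using corner_coordinates by blast
  have uv: "u = fst (J j) \<or> u = fst (J j) + 1" "v = snd (J j) \<or> v = snd (J j) + 1"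
    using uv_all[OF assms] by auto
  let ?q = "(corner_index (M ^ n) (fst (J j)) u, corner_index (M ^ n) (snd (J j)) v)"
  have iff: "grid_sq M (Suc n) q \<subseteq> grid_sq M 1 (J j) \<and> x \<in> grid_sq M (Suc n) q \<longleftrightarrow> q = ?q" for q
    using grid_sq_refine_corner_iff[OF M_pos uv, of n q] unfolding x by simp
  have q: "corner_sq n j = ?q"
    unfolding corner_sq_def iff by (rule the_eq_trivial)
  show "grid_sq M (Suc n) q \<subseteq> grid_sq M 1 (J j) \<and> x \<in> grid_sq M (Suc n) q \<longleftrightarrow> q = corner_sq n j"
    unfolding q by (rule iff)
  have Mn: "M ^ n > 0" using M_pos by simp
  show "fst (corner_sq n j) < M ^ Suc n \<and> snd (corner_sq n j) < M ^ Suc n"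
    using corner_index_less[OF Mn _ uv(1)] corner_index_less[OF Mn _ uv(2)] J_valid[OF assms]
    by (simp add: q mult.commute)
  show "(fst (corner_sq n j) div M ^ n, snd (corner_sq n j) div M ^ n) = J j"
    using corner_index_div[OF Mn uv(1)] corner_index_div[OF Mn uv(2)] by (simp add: q)
qed

lemma corner_mem_Cset_iff:
  assumes "j \<in> {1..4}"
  shows "x \<in> Cset M X (Suc n) (grid_sq M 1 (J j)) \<omega> \<longleftrightarrow> \<not> kept M X (Suc n) (corner_sq n j) \<omega>"
proof -
  have "x \<in> Cset M X (Suc n) (grid_sq M 1 (J j)) \<omega> \<longleftrightarrow>
      (\<exists>q. fst q < M ^ Suc n \<and> snd q < M ^ Suc n \<and> \<not> kept M X (Suc n) q \<omega> \<and>
        (grid_sq M (Suc n) q \<subseteq> grid_sq M 1 (J j) \<and> x \<in> grid_sq M (Suc n) q))"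
    unfolding Cset_def by auto
  also have "\<dots> \<longleftrightarrow> \<not> kept M X (Suc n) (corner_sq n j) \<omega>"
    unfolding corner_sq_iff[OF assms] using corner_sq_less[OF assms, of n] by (simp del: split_paired_Ex)
  finally show ?thesis .
qed

lemma Inter_Cset_eq:
  assumes "{1, 2} \<subseteq> T" and "T \<subseteq> {1..4}"
  shows "(\<Inter>j\<in>T. Cset M X (Suc n) (grid_sq M 1 (J j)) \<omega>)
    = (if \<forall>j\<in>T. \<not> kept M X (Suc n) (corner_sq n j) \<omega> then {x} else {})"
proof -
  have "Cset M X (Suc n) (grid_sq M 1 (J j)) \<omega> \<subseteq> grid_sq M 1 (J j)" for j
    unfolding Cset_def by blast
  then have "(\<Inter>j\<in>T. Cset M X (Suc n) (grid_sq M 1 (J j)) \<omega>) \<subseteq> grid_sq M 1 (J 1) \<inter> grid_sq M 1 (J 2)"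
    using assms(1) by blast
  then have "(\<Inter>j\<in>T. Cset M X (Suc n) (grid_sq M 1 (J j)) \<omega>) \<subseteq> {x}"
    unfolding J12 .
  moreover have "x \<in> Cset M X (Suc n) (grid_sq M 1 (J j)) \<omega> \<longleftrightarrow> \<not> kept M X (Suc n) (corner_sq n j) \<omega>"
    if "j \<in> T" for j
    using corner_mem_Cset_iff assms(2) that by blast
  then have "x \<in> (\<Inter>j\<in>T. Cset M X (Suc n) (grid_sq M 1 (J j)) \<omega>)
      \<longleftrightarrow> (\<forall>j\<in>T. \<not> kept M X (Suc n) (corner_sq n j) \<omega>)"
    by blast
  ultimately show ?thesis by auto
qed

lemma prob_corners_removed:
  assumes "T \<subseteq> {1..4}"
  shows "prob {\<omega> \<in> space P. \<forall>j\<in>T. \<not> kept M X (Suc n) (corner_sq n j) \<omega>} = (1 - p ^ Suc n) ^ card T"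
proof -
  let ?I = "{(k, q). 1 \<le> k \<and> fst q < M ^ k \<and> snd q < M ^ k}"
  define A where "A = (\<lambda>i. {\<omega> \<in> space P. (\<lambda>(k, q). X k q) i \<omega>})"
  define B where "B = (\<lambda>j. lineage M (Suc n) (corner_sq n j))"
  have "indep_events A ?I"
    unfolding A_def by (rule indep_eventsI_indep_vars[OF indep]) simp
  moreover have "disjoint_family_on B T"
    unfolding disjoint_family_on_def
  proof (intro ballI impI)
    fix j j' assume "j \<in> T" "j' \<in> T" "j \<noteq> j'"
    then have jj: "j \<in> {1..4}" "j' \<in> {1..4}" and "J j \<noteq> J j'"
      using J_inj assms by (auto dest: inj_onD)
    then show "B j \<inter> B j' = {}"
      unfolding B_def using corner_sq_div[OF jj(1), of n] corner_sq_div[OF jj(2), of n]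
      by (intro lineage_disjointI) simp
  qed
  moreover have B_coins: "finite (B j) \<and> B j \<subseteq> ?I" if "j \<in> T" for j
  proof -
    have "j \<in> {1..4}" using that assms by blast
    then show ?thesis
      unfolding B_def using corner_sq_less lineage_subset_coins finite_lineage by blast
  qed
  moreover have "finite T"
    using assms finite_subset by blast
  ultimately have "prob {\<omega> \<in> space P. (\<forall>i\<in>{}. \<omega> \<in> A i) \<and> (\<forall>j\<in>T. \<exists>i\<in>B j. \<omega> \<notin> A i)}
      = (\<Prod>i\<in>{}. prob (A i)) * (\<Prod>j\<in>T. 1 - (\<Prod>i\<in>B j. prob (A i)))"
    by (intro prob_indep_events_all_and_blocks_fail) auto
  moreover have "{\<omega> \<in> space P. (\<forall>i\<in>{}. \<omega> \<in> A i) \<and> (\<forall>j\<in>T. \<exists>i\<in>B j. \<omega> \<notin> A i)}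
      = {\<omega> \<in> space P. \<forall>j\<in>T. \<not> kept M X (Suc n) (corner_sq n j) \<omega>}"
    unfolding A_def B_def kept_iff_lineage by (auto simp: split_beta)
  moreover have "(\<Prod>i\<in>B j. prob (A i)) = p ^ Suc n" if "j \<in> T" for j
  proof -
    have "prob (A i) = p" if "i \<in> B j" for i
      using B_coins[OF \<open>j \<in> T\<close>] that bern unfolding A_def by auto
    then have "(\<Prod>i\<in>B j. prob (A i)) = p ^ card (B j)"
      by simp
    then show ?thesis
      unfolding B_def card_lineage .
  qed
  ultimately show ?thesis
    by simp
qed

lemma expectation_euler_char_Inter_Cset:
  assumes "{1, 2} \<subseteq> T" and "T \<subseteq> {1..4}"
  shows "integral\<^sup>L P (\<lambda>\<omega>. real_of_int (euler_char (\<Inter>j\<in>T. Cset M X (Suc n) (grid_sq M 1 (J j)) \<omega>)))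
    = (1 - p ^ Suc n) ^ card T"
proof -
  let ?R = "{\<omega>. \<forall>j\<in>T. \<not> kept M X (Suc n) (corner_sq n j) \<omega>}"
  have "real_of_int (euler_char (\<Inter>j\<in>T. Cset M X (Suc n) (grid_sq M 1 (J j)) \<omega>)) = indicator ?R \<omega>" for \<omega>
    using Inter_Cset_eq[OF assms] by (simp add: indicator_def euler_char_singleton euler_char_empty)
  then have "integral\<^sup>L P (\<lambda>\<omega>. real_of_int (euler_char (\<Inter>j\<in>T. Cset M X (Suc n) (grid_sq M 1 (J j)) \<omega>)))
      = measure P (?R \<inter> space P)"
    by simp
  also have "?R \<inter> space P = {\<omega> \<in> space P. \<forall>j\<in>T. \<not> kept M X (Suc n) (corner_sq n j) \<omega>}"
    by blast
  finally show ?thesis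
    using prob_corners_removed[OF assms(2)] by simp
qed

lemma p_nonneg: "0 \<le> p" and p_le_1: "p \<le> 1"
  using bern[of 1 "(0, 0)"] M_pos by auto

lemma suminf_scaled_expectation_euler_char:
  assumes "{1, 2} \<subseteq> T" and "T \<subseteq> {1..4}" and "0 \<le> c" and "c < 1"
  shows "(\<Sum>n. c ^ Suc n * integral\<^sup>L P
            (\<lambda>\<omega>. real_of_int (euler_char (\<Inter>j\<in>T. Cset M X (Suc n) (grid_sq M 1 (J j)) \<omega>))))
    = (\<Sum>i\<le>card T. (-1) ^ i * real (card T choose i) * (c * p ^ i / (1 - c * p ^ i)))"
  unfolding expectation_euler_char_Inter_Cset[OF assms(1,2)]
  by (rule sums_unique[symmetric], rule sums_power_Suc_times_one_minus_power_Suc) (use assms p_nonneg p_le_1 in auto)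

end

lemma geometric_ratio_eq:
  fixes a p :: real
  assumes "0 < p" and "p \<le> 1" and "1 < a * p"
  shows "1 / (a * p) / (1 - 1 / (a * p)) = 1 / (a * p - 1)"
    and "1 / (a * p) * p ^ Suc i / (1 - 1 / (a * p) * p ^ Suc i) = p ^ i / (a - p ^ i)"
proof -
  have "a * p \<noteq> 0" "a * p \<noteq> 1" using assms(3) by auto
  then show "1 / (a * p) / (1 - 1 / (a * p)) = 1 / (a * p - 1)"
    by (simp add: field_simps)
  have "p ^ i \<le> 1" using assms by (simp add: power_le_one)
  moreover have "1 < a"
  proof (rule ccontr)
    assume "\<not> 1 < a"
    then have "a * p \<le> 1 * 1" using assms by (intro mult_mono) auto
    then show False using assms(3) by simp
  qed
  ultimately have "p ^ i < a" by linarith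
  then show "1 / (a * p) * p ^ Suc i / (1 - 1 / (a * p) * p ^ Suc i) = p ^ i / (a - p ^ i)"
    using assms \<open>1 < a\<close> by (simp add: field_simps)
qed

theorem lemma5p10:
  fixes M :: nat and p :: real
    and P :: "'a measure"
    and X :: "nat \<Rightarrow> nat \<times> nat \<Rightarrow> 'a \<Rightarrow> bool"
    and x :: "real \<times> real"
    and J :: "nat \<Rightarrow> nat \<times> nat"
  assumes M2: "M \<ge> 2"
    and p_gt: "p > 1 / real M ^ 2" and p_le: "p \<le> 1"
    and prob: "prob_space P"
    and indep: "prob_space.indep_vars P (\<lambda>_. count_space UNIV) (\<lambda>(k, q). X k q)
                  {(k, q). 1 \<le> k \<and> fst q < M ^ k \<and> snd q < M ^ k}"
    and bern: "\<And>k q. 1 \<le> k \<Longrightarrow> fst q < M ^ k \<Longrightarrow> snd q < M ^ k \<Longrightarrow>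
                  measure P {\<omega> \<in> space P. X k q \<omega>} = p"
    and J_valid: "\<And>j. j \<in> {1..4} \<Longrightarrow> fst (J j) < M \<and> snd (J j) < M"
    and J_inj: "inj_on J {1..4}"
    and x_corner: "\<And>j. j \<in> {1..4} \<Longrightarrow> x \<in> grid_sq M 1 (J j)"
    and J12: "grid_sq M 1 (J 1) \<inter> grid_sq M 1 (J 2) = {x}"
  defines "D \<equiv> ln (real M ^ 2 * p) / ln (real M)"
    and "r \<equiv> 1 / real M"
    and "C \<equiv> (\<lambda>n j \<omega>. Cset M X n (grid_sq M 1 (J j)) \<omega>)"
  defines "E2 \<equiv> 2 * (real M - 1) ^ 2 * (\<Sum>n. r powr (real (Suc n) * D) *
              integral\<^sup>L P (\<lambda>\<omega>. real_of_int (euler_char (C (Suc n) 1 \<omega> \<inter> C (Suc n) 2 \<omega>))))"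
    and "E3 \<equiv> 4 * (real M - 1) ^ 2 * (\<Sum>n. r powr (real (Suc n) * D) *
              integral\<^sup>L P (\<lambda>\<omega>. real_of_int (euler_char
                 (C (Suc n) 1 \<omega> \<inter> C (Suc n) 2 \<omega> \<inter> C (Suc n) 3 \<omega>))))"
    and "E4 \<equiv> (real M - 1) ^ 2 * (\<Sum>n. r powr (real (Suc n) * D) *
              integral\<^sup>L P (\<lambda>\<omega>. real_of_int (euler_char (\<Inter>j\<in>{1..4}. C (Suc n) j \<omega>))))"
  shows "E2 = 2 * (real M - 1) ^ 2 *
              (1 / (real M ^ 2 * p - 1) - 2 / (real M ^ 2 - 1) + p / (real M ^ 2 - p)) \<and>
         E3 = 4 * (real M - 1) ^ 2 *
              (1 / (real M ^ 2 * p - 1) - 3 / (real M ^ 2 - 1) + 3 * p / (real M ^ 2 - p)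
               - p ^ 2 / (real M ^ 2 - p ^ 2)) \<and>
         E4 = (real M - 1) ^ 2 *
              (1 / (real M ^ 2 * p - 1) - 4 / (real M ^ 2 - 1) + 6 * p / (real M ^ 2 - p)
               - 4 * p ^ 2 / (real M ^ 2 - p ^ 2) + p ^ 3 / (real M ^ 2 - p ^ 3))"
proof -
  interpret corner_percolation P M p X x J
  proof (intro corner_percolation.intro corner_percolation_axioms.intro prob)
    show "0 < M" using M2 by simp
  qed (use indep bern J_valid J_inj x_corner J12 in auto)
  have M: "1 < real M" using M2 by simp
  have "0 < 1 / real M ^ 2" using M by simp
  then have p_pos: "0 < p" using p_gt by linarith
  have Mp: "1 < real M ^ 2 * p" using p_gt M by (simp add: field_simps)
  define c where "c = 1 / (real M ^ 2 * p)"
  have c: "0 \<le> c" "c < 1"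
    unfolding c_def using Mp by auto
  have r_powr: "r powr (real (Suc n) * D) = c ^ Suc n" for n
    unfolding r_def D_def c_def using M Mp by (intro inverse_powr_log_quotient) auto
  have series: "(\<Sum>n. r powr (real (Suc n) * D) * integral\<^sup>L P
          (\<lambda>\<omega>. real_of_int (euler_char (\<Inter>j\<in>T. C (Suc n) j \<omega>))))
      = (\<Sum>i\<le>card T. (-1) ^ i * real (card T choose i) * (c * p ^ i / (1 - c * p ^ i)))"
    if "{1, 2} \<subseteq> T" "T \<subseteq> {1..4}" for T
    unfolding r_powr C_def using suminf_scaled_expectation_euler_char[OF that c] .
  note ratio = geometric_ratio_eq[OF p_pos p_le Mp, folded c_def]
  show ?thesis
    unfolding E2_def E3_def E4_def
    using series[of "{1, 2}"] series[of "{1, 2, 3}"] series[of "{1..4}"]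
      ratio(1) ratio(2)[of 0] ratio(2)[of 1] ratio(2)[of 2] ratio(2)[of 3]
    by (simp add: Int_assoc eval_nat_numeral atMost_Suc)
qed

end
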